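(* Let $\lambda\subset n\times n$ be a Young diagram with at least as many boxes above the main diagonal as below. Let $\lambda^c=\nu_1+\cdots+\nu_k$ be the hook decomposition of its complement, and for each $i$ let $\lambda_i$ be the complement in the $n\times n$ square of $\nu_i$ placed right-justified in the bottom right corner. Then for every face label $\mu$ of $G^{\text{co-rect}}_n$, i.e. every $\mu=(n^a,b^{n-a})$ with $0\le a,b\le n$, \[\mathrm{maxdiag}(\mu\setminus\lambda)=\sum_{i=1}^k\mathrm{maxdiag}(\mu\setminus\lambda_i).\]
   Context: Young diagrams are drawn in English notation inside the $n\times n$ square, top-left justified. The face labels of the co-rectangles plabic graph are the diagrams $(n^a,b^{n-a})$, $0\le a,b\le n$ (the diagrams whose complement in the square is a rectangle in the bottom right corner). Hook decomposition: the complement $\lambda^c$ of $\lambda$ in the square, rotated by $180^\circ$, is a Young diagram; $\lambda^c=\nu_1+\cdots+\nu_k$ is its decomposition into the hooks $\nu_i=(a_i,1^{b_i})$ with corners at its successive diagonal boxes (so $a_1>a_2>\cdots$, $b_1>b_2>\cdots$). Placing a hook $(a,1^b)$ right-justified in the bottom right corner means occupying the last $a$ boxes of the bottom row and the last $b+1$ boxes of the rightmost column. For a set $\nu$ of boxes of the square (e.g. the set difference $\mu\setminus\lambda$), $\mathrm{maxdiag}(\nu)$ is the maximum number of boxes of $\nu$ on a single diagonal of slope $-1$. *)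

theory Defs
  imports Main
begin

text \<open>Boxes of the n x n square are pairs (r,c) with r = row (0 = top),
  c = column (0 = left), 0 \<le> r,c < n (English notation).\<close>

definition square :: "nat \<Rightarrow> (nat \<times> nat) set" where
  "square n = {(r,c). r < n \<and> c < n}"

definition young_diagram :: "nat \<Rightarrow> (nat \<times> nat) set \<Rightarrow> bool" where
  "young_diagram n lam \<longleftrightarrow> lam \<subseteq> square n \<and>
     (\<forall>r c r' c'. (r,c) \<in> lam \<and> r' \<le> r \<and> c' \<le> c \<longrightarrow> (r',c') \<in> lam)"

definition boxes_above_diag :: "(nat \<times> nat) set \<Rightarrow> (nat \<times> nat) set" where
  "boxes_above_diag S = {(r,c) \<in> S. r < c}"

definition boxes_below_diag :: "(nat \<times> nat) set \<Rightarrow> (nat \<times> nat) set" where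
  "boxes_below_diag S = {(r,c) \<in> S. c < r}"

definition rot180 :: "nat \<Rightarrow> (nat \<times> nat) set \<Rightarrow> (nat \<times> nat) set" where
  "rot180 n S = (\<lambda>(r,c). (n - 1 - r, n - 1 - c)) ` S"

definition rotated_complement :: "nat \<Rightarrow> (nat \<times> nat) set \<Rightarrow> (nat \<times> nat) set" where
  "rotated_complement n lam = rot180 n (square n - lam)"

text \<open>Hook decomposition of a Young diagram rho: the i-th hook has its corner at the
  diagonal box (i,i); it is (a,1^b) with a = number of boxes of rho in row i from column i on
  (corner included), b = number of boxes of rho in column i strictly below row i.\<close>
definition durfee :: "(nat \<times> nat) set \<Rightarrow> nat" where
  "durfee rho = card {i. (i,i) \<in> rho}"

definition hook_arm :: "(nat \<times> nat) set \<Rightarrow> nat \<Rightarrow> nat" where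
  "hook_arm rho i = card {c. i \<le> c \<and> (i,c) \<in> rho}"

definition hook_leg :: "(nat \<times> nat) set \<Rightarrow> nat \<Rightarrow> nat" where
  "hook_leg rho i = card {r. i < r \<and> (r,i) \<in> rho}"

definition hook_decomposition :: "(nat \<times> nat) set \<Rightarrow> (nat \<times> nat) list" where
  "hook_decomposition rho = map (\<lambda>i. (hook_arm rho i, hook_leg rho i)) [0..<durfee rho]"

definition placed_hook :: "nat \<Rightarrow> nat \<Rightarrow> nat \<Rightarrow> (nat \<times> nat) set" where
  "placed_hook n a b = {(r,c). r = n - 1 \<and> n - a \<le> c \<and> c < n}
                     \<union> {(r,c). c = n - 1 \<and> n - 1 - b \<le> r \<and> r < n}"

definition hook_diagram :: "nat \<Rightarrow> nat \<times> nat \<Rightarrow> (nat \<times> nat) set" where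
  "hook_diagram n ab = square n - placed_hook n (fst ab) (snd ab)"

text \<open>Face labels of the co-rectangles plabic graph: (n^a, b^(n-a)).\<close>
definition corect_label :: "nat \<Rightarrow> nat \<Rightarrow> nat \<Rightarrow> (nat \<times> nat) set" where
  "corect_label n a b = {(r,c) \<in> square n. r < a \<or> c < b}"

text \<open>Diagonals of slope -1 are the sets c - r = const.  maxdiag S is the maximal number of
  boxes of S on one such diagonal (0 for the empty set).\<close>
definition diag_count :: "(nat \<times> nat) set \<Rightarrow> int \<Rightarrow> nat" where
  "diag_count S d = card {(r,c) \<in> S. int c - int r = d}"

definition maxdiag :: "(nat \<times> nat) set \<Rightarrow> nat" where
  "maxdiag S = Max (insert 0 (diag_count S ` {int c - int r | r c. (r,c) \<in> S}))"

end

theory Submission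
  imports Defs
begin

(* Rotating the square by 180 degrees turns mu - lambda into rho - R, where rho is the rotated
   complement of lambda (a Young diagram) and R is the (n-a) x (n-b) rectangle in the top left
   corner.  Call the i-th hook of rho exceeding if, moved so that its corner is at (0,0), it does
   not fit into R.  The boxes of rho - R on any one diagonal are sent injectively to exceeding
   hooks, while on one of the two diagonals through the corners (0, n-b) and (n-a, 0) of R every
   exceeding hook contributes a box; so maxdiag (mu - lambda) is the number of exceeding hooks.
   A hook placed in the bottom right corner has at most one box on each diagonal, so the i-th
   summand is 1 or 0 according as the placed hook meets mu or not, i.e. as the i-th hook is
   exceeding or not. *)

lemma young_diagram_downward:
  "young_diagram n rho \<Longrightarrow> (r, c) \<in> rho \<Longrightarrow> r' \<le> r \<Longrightarrow> c' \<le> c \<Longrightarrow> (r', c') \<in> rho"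
  unfolding young_diagram_def by blast

lemma young_diagram_bounded: "young_diagram n rho \<Longrightarrow> (r, c) \<in> rho \<Longrightarrow> r < n \<and> c < n"
  unfolding young_diagram_def square_def by blast

lemma finite_square: "finite (square n)"
  unfolding square_def by (rule finite_subset[of _ "{..<n} \<times> {..<n}"]) auto

lemma young_diagram_finite: "young_diagram n rho \<Longrightarrow> finite rho"
  unfolding young_diagram_def using finite_square finite_subset by blast

lemma down_closed_eq_lessThan_card:
  fixes S :: "nat set"
  assumes "finite S" and "\<And>i j. i \<in> S \<Longrightarrow> j \<le> i \<Longrightarrow> j \<in> S"
  shows "S = {..<card S}"
proof (cases "S = {}")
  case False
  with assms have "S = {..Max S}" by (auto intro: Max_in)
  then show ?thesis by (metis card_lessThan lessThan_Suc_atMost)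
qed simp

lemma young_diagram_monotone_path_initial:
  fixes f g :: "nat \<Rightarrow> nat"
  assumes rho: "young_diagram n rho" and "mono f" "mono g" and "\<And>k. k \<le> f k + g k"
  obtains m where "{k. (f k, g k) \<in> rho} = {..<m}"
proof -
  let ?P = "{k. (f k, g k) \<in> rho}"
  have "?P = {..<card ?P}"
  proof (rule down_closed_eq_lessThan_card)
    show "finite ?P"
    proof (rule finite_subset[of _ "{..<2 * n}"])
      show "?P \<subseteq> {..<2 * n}"
      proof
        fix k assume "k \<in> ?P"
        then have "f k < n" "g k < n" using young_diagram_bounded[OF rho] by auto
        then show "k \<in> {..<2 * n}" using assms(4)[of k] by simp
      qed
    qed simp
    show "j \<in> ?P" if "k \<in> ?P" "j \<le> k" for k j
      using that young_diagram_downward[OF rho _ monoD[OF \<open>mono f\<close>] monoD[OF \<open>mono g\<close>]] by blast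
  qed
  then show ?thesis using that by blast
qed

definition diag_index :: "nat \<times> nat \<Rightarrow> int" where
  "diag_index = (\<lambda>(r, c). int c - int r)"

lemma diag_count_eq_card: "diag_count S d = card {x \<in> S. diag_index x = d}"
  unfolding diag_count_def diag_index_def by (rule arg_cong[where f = card]) auto

lemma diag_count_image:
  assumes "inj_on f S"
  shows "diag_count (f ` S) d = card {x \<in> S. diag_index (f x) = d}"
proof -
  have "{x \<in> f ` S. diag_index x = d} = f ` {x \<in> S. diag_index (f x) = d}" by auto
  moreover have "inj_on f {x \<in> S. diag_index (f x) = d}"
    using assms by (rule inj_on_subset) auto
  ultimately show ?thesis by (simp add: diag_count_eq_card card_image)
qed

lemma diag_count_nonneg: "diag_count S (int j) = card {r. (r, r + j) \<in> S}"
proof -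
  have "int c - int r = int j \<longleftrightarrow> c = r + j" for r c by auto
  then have "x \<in> S \<and> diag_index x = int j \<longleftrightarrow> (\<exists>r. x = (r, r + j) \<and> (r, r + j) \<in> S)" for x
    by (cases x) (auto simp: diag_index_def)
  then have "{x \<in> S. diag_index x = int j} = (\<lambda>r. (r, r + j)) ` {r. (r, r + j) \<in> S}"
    by blast
  moreover have "inj (\<lambda>r. (r, r + j))" by (rule injI) simp
  ultimately show ?thesis
    by (simp add: diag_count_eq_card card_image inj_on_subset[of _ UNIV])
qed

lemma diag_index_image: "{int c - int r | r c. (r, c) \<in> S} = diag_index ` S"
  unfolding diag_index_def by force

lemma range_diag_count:
  assumes "finite S"
  shows "range (diag_count S) = insert 0 (diag_count S ` diag_index ` S)"
proof -
  obtain d0 where "d0 \<notin> diag_index ` S"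
    using ex_new_if_finite[OF infinite_UNIV_int] assms by blast
  moreover have "diag_count S d = 0" if "d \<notin> diag_index ` S" for d
  proof -
    have "{x \<in> S. diag_index x = d} = {}" using that by auto
    then show ?thesis unfolding diag_count_eq_card by (metis card.empty)
  qed
  ultimately show ?thesis by (auto intro: range_eqI[of _ _ d0])
qed

lemma maxdiag_eq_Max_range: "finite S \<Longrightarrow> maxdiag S = Max (range (diag_count S))"
  unfolding maxdiag_def diag_index_image by (simp add: range_diag_count)

lemma finite_range_diag_count: "finite S \<Longrightarrow> finite (range (diag_count S))"
  by (simp add: range_diag_count)

lemma maxdiag_eqI:
  assumes "finite S" and "\<And>d. diag_count S d \<le> m" and "diag_count S d = m"
  shows "maxdiag S = m"
  unfolding maxdiag_eq_Max_range[OF \<open>finite S\<close>]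
  using assms by (intro Max_eqI finite_range_diag_count) (auto intro: range_eqI)

lemma maxdiag_reflect:
  assumes "finite S" and "inj_on f S" and "\<And>x. x \<in> S \<Longrightarrow> diag_index (f x) = - diag_index x"
  shows "maxdiag (f ` S) = maxdiag S"
proof -
  have "diag_count (f ` S) d = diag_count S (- d)" for d
  proof -
    have "{x \<in> S. diag_index (f x) = d} = {x \<in> S. diag_index x = - d}" using assms(3) by auto
    then show ?thesis unfolding diag_count_image[OF assms(2)] by (simp add: diag_count_eq_card)
  qed
  then have "range (diag_count (f ` S)) = range (diag_count S \<circ> uminus)" by auto
  also have "\<dots> = range (diag_count S)"
    unfolding image_comp[symmetric] by (metis minus_minus surjI)
  finally show ?thesis using assms(1) by (simp add: maxdiag_eq_Max_range)
qed

lemma maxdiag_inj_on_diag_index: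
  assumes "finite T" and "inj_on diag_index T"
  shows "maxdiag T = (if T = {} then 0 else 1)"
proof (cases "T = {}")
  case True
  then show ?thesis by (simp add: maxdiag_def)
next
  case False
  then obtain x where "x \<in> T" by blast
  have bound: "diag_count T d \<le> 1" for d
    unfolding diag_count_eq_card One_nat_def using assms
    by (subst card_le_Suc0_iff_eq) (auto dest: inj_onD)
  have attained: "diag_count T (diag_index x) = 1"
  proof -
    have "{y \<in> T. diag_index y = diag_index x} = {x}" using \<open>x \<in> T\<close> assms(2) by (auto dest: inj_onD)
    then show ?thesis by (simp add: diag_count_eq_card)
  qed
  show ?thesis using False maxdiag_eqI[OF assms(1) bound attained] by simp
qed

lemma mem_rot180:
  assumes "S \<subseteq> square n"
  shows "(r, c) \<in> rot180 n S \<longleftrightarrow> r < n \<and> c < n \<and> (n - 1 - r, n - 1 - c) \<in> S"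
proof
  assume "(r, c) \<in> rot180 n S"
  then obtain r' c' where "(r', c') \<in> S" "r = n - 1 - r'" "c = n - 1 - c'"
    unfolding rot180_def by auto
  moreover have "r' < n" "c' < n" using assms calculation(1) unfolding square_def by auto
  ultimately show "r < n \<and> c < n \<and> (n - 1 - r, n - 1 - c) \<in> S"
    by (auto simp: Suc_diff_Suc)
next
  assume "r < n \<and> c < n \<and> (n - 1 - r, n - 1 - c) \<in> S"
  then show "(r, c) \<in> rot180 n S"
    unfolding rot180_def by (auto intro!: image_eqI[where x = "(n - 1 - r, n - 1 - c)"])
qed

lemma maxdiag_rot180:
  assumes "S \<subseteq> square n"
  shows "maxdiag (rot180 n S) = maxdiag S"
  unfolding rot180_def
proof (rule maxdiag_reflect)
  show "finite S" using assms finite_square finite_subset by blast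
  have "inj_on (\<lambda>(r, c). (n - 1 - r, n - 1 - c)) (square n)"
    by (rule inj_onI) (auto simp: square_def)
  then show "inj_on (\<lambda>(r, c). (n - 1 - r, n - 1 - c)) S"
    using assms by (rule inj_on_subset)
  show "diag_index ((\<lambda>(r, c). (n - 1 - r, n - 1 - c)) x) = - diag_index x" if "x \<in> S" for x
    using that assms by (auto simp: square_def diag_index_def)
qed

lemma young_diagram_rotated_complement:
  assumes "young_diagram n lam"
  shows "young_diagram n (rotated_complement n lam)"
proof -
  have mem: "(r, c) \<in> rotated_complement n lam \<longleftrightarrow> r < n \<and> c < n \<and> (n - 1 - r, n - 1 - c) \<notin> lam"
    for r c
    unfolding rotated_complement_def by (subst mem_rot180) (auto simp: square_def)
  show ?thesis
    unfolding young_diagram_def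
  proof (intro conjI allI impI subsetI)
    show "x \<in> square n" if "x \<in> rotated_complement n lam" for x
      using that mem by (cases x) (auto simp: square_def)
    show "(r', c') \<in> rotated_complement n lam"
      if "(r, c) \<in> rotated_complement n lam \<and> r' \<le> r \<and> c' \<le> c" for r c r' c'
      using that young_diagram_downward[OF assms, of "n - 1 - r'" "n - 1 - c'" "n - 1 - r" "n - 1 - c"]
      unfolding mem by (auto intro: diff_le_mono2)
  qed
qed

definition top_left_rectangle :: "nat \<Rightarrow> nat \<Rightarrow> (nat \<times> nat) set" where
  "top_left_rectangle p q = {(r, c). r < p \<and> c < q}"

lemma corect_label_diff_eq_rot180:
  assumes "a \<le> n" and "b \<le> n"
  shows "corect_label n a b - lam
       = rot180 n (rotated_complement n lam - top_left_rectangle (n - a) (n - b))"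
proof (rule set_eqI, clarify)
  fix r c
  have "rotated_complement n lam - top_left_rectangle (n - a) (n - b) \<subseteq> square n"
    unfolding rotated_complement_def rot180_def square_def by auto
  then show "(r, c) \<in> corect_label n a b - lam
      \<longleftrightarrow> (r, c) \<in> rot180 n (rotated_complement n lam - top_left_rectangle (n - a) (n - b))"
    using assms unfolding rotated_complement_def
    by (auto simp: mem_rot180 corect_label_def square_def top_left_rectangle_def)
qed

definition exceeding_hooks :: "(nat \<times> nat) set \<Rightarrow> nat \<Rightarrow> nat \<Rightarrow> nat set" where
  "exceeding_hooks rho p q = {i. (i, i) \<in> rho \<and> ((i, i + q) \<in> rho \<or> (i + p, i) \<in> rho)}"

lemma finite_exceeding_hooks: "young_diagram n rho \<Longrightarrow> finite (exceeding_hooks rho p q)"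
  unfolding exceeding_hooks_def
  by (rule finite_subset[of _ "{..<n}"]) (auto dest: young_diagram_bounded)

lemma diag_count_diff_rectangle_le:
  assumes rho: "young_diagram n rho"
  shows "diag_count (rho - top_left_rectangle p q) (int j) \<le> card (exceeding_hooks rho p q)"
proof -
  let ?R = "{r. (r, r + j) \<in> rho - top_left_rectangle p q}"
  \<comment> \<open>A box (r, r + j) outside the rectangle has r \<ge> s, and the box (r - s, r - s + q)
    or (r - s + p, r - s) weakly above-left of it shows that hook r - s is exceeding.\<close>
  define s where "s = min p (q - j)"
  have "s \<le> r" if "r \<in> ?R" for r
    using that unfolding s_def top_left_rectangle_def by auto
  then have "inj_on (\<lambda>r. r - s) ?R"
    by (intro inj_onI) (metis eq_diff_iff)
  moreover have "r - s \<in> exceeding_hooks rho p q" if "r \<in> ?R" for r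
  proof -
    have "r - s \<le> r" "r - s + q \<le> r + j \<or> r - s + p \<le> r"
      using that unfolding s_def top_left_rectangle_def by auto
    then show ?thesis
      using that young_diagram_downward[OF rho, of r "r + j"] unfolding exceeding_hooks_def by force
  qed
  ultimately have "card ?R \<le> card (exceeding_hooks rho p q)"
    using finite_exceeding_hooks[OF rho] by (intro card_inj_on_le) auto
  then show ?thesis by (simp add: diag_count_nonneg)
qed

lemma young_diagram_transpose: "young_diagram n rho \<Longrightarrow> young_diagram n (prod.swap ` rho)"
  unfolding young_diagram_def square_def by force

lemma exceeding_hooks_transpose: "exceeding_hooks (prod.swap ` rho) q p = exceeding_hooks rho p q"
  unfolding exceeding_hooks_def by auto

lemma diag_count_diff_rectangle_transpose:
  "diag_count (rho - top_left_rectangle p q) (- d)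
     = diag_count (prod.swap ` rho - top_left_rectangle q p) d"
proof -
  have "prod.swap ` rho - top_left_rectangle q p = prod.swap ` (rho - top_left_rectangle p q)"
    unfolding top_left_rectangle_def by auto
  then have "diag_count (prod.swap ` rho - top_left_rectangle q p) d
      = card {x \<in> rho - top_left_rectangle p q. diag_index (prod.swap x) = d}"
    by (simp add: diag_count_image)
  also have "\<dots> = diag_count (rho - top_left_rectangle p q) (- d)"
    unfolding diag_count_eq_card by (rule arg_cong[where f = card]) (auto simp: diag_index_def)
  finally show ?thesis by simp
qed

lemma maxdiag_diff_rectangle:
  assumes rho: "young_diagram n rho"
  shows "maxdiag (rho - top_left_rectangle p q) = card (exceeding_hooks rho p q)"
proof -
  let ?S = "rho - top_left_rectangle p q" and ?H = "exceeding_hooks rho p q"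
  let ?arms = "{i. (i, i + q) \<in> rho}" and ?legs = "{i. (i + p, i) \<in> rho}"
  have bound: "diag_count ?S d \<le> card ?H" for d
  proof (cases "0 \<le> d")
    case True
    then obtain j where "d = int j" using nonneg_int_cases by blast
    then show ?thesis using diag_count_diff_rectangle_le[OF rho] by simp
  next
    case False
    then obtain j where "d = - int j" by (metis minus_minus neg_0_le_iff_le nonneg_int_cases nle_le)
    then have "diag_count ?S d = diag_count (prod.swap ` rho - top_left_rectangle q p) (int j)"
      by (simp add: diag_count_diff_rectangle_transpose)
    also have "\<dots> \<le> card ?H"
      using diag_count_diff_rectangle_le[OF young_diagram_transpose[OF rho]]
      by (simp add: exceeding_hooks_transpose)
    finally show ?thesis .
  qed
  obtain k where arms: "?arms = {..<k}"
    by (rule young_diagram_monotone_path_initial[OF rho, of "\<lambda>i. i" "\<lambda>i. i + q"])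
      (auto simp: mono_def)
  obtain l where legs: "?legs = {..<l}"
    by (rule young_diagram_monotone_path_initial[OF rho, of "\<lambda>i. i + p" "\<lambda>i. i"])
      (auto simp: mono_def)
  have on_arms: "diag_count ?S (int q) = k"
    using arms by (simp add: diag_count_nonneg top_left_rectangle_def)
  have on_legs: "diag_count ?S (- int p) = l"
    using legs unfolding diag_count_diff_rectangle_transpose diag_count_nonneg
    by (simp add: top_left_rectangle_def)
  have "?H = ?arms \<union> ?legs"
    unfolding exceeding_hooks_def using young_diagram_downward[OF rho] by auto
  also have "\<dots> = {..<max k l}"
    unfolding arms legs by auto
  finally have "card ?H = max k l" by simp
  have finite: "finite ?S" using young_diagram_finite[OF rho] by simp
  show ?thesis
  proof (cases "l \<le> k")
    case True
    then show ?thesis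
      using on_arms \<open>card ?H = _\<close> by (intro maxdiag_eqI[OF finite bound, of "int q"]) simp
  next
    case False
    then show ?thesis
      using on_legs \<open>card ?H = _\<close> by (intro maxdiag_eqI[OF finite bound, of "- int p"]) simp
  qed
qed

lemma less_durfee_iff:
  assumes rho: "young_diagram n rho"
  shows "i < durfee rho \<longleftrightarrow> (i, i) \<in> rho"
proof -
  obtain m where "{i. (i, i) \<in> rho} = {..<m}"
    by (rule young_diagram_monotone_path_initial[OF rho, of "\<lambda>i. i" "\<lambda>i. i"])
      (auto simp: mono_def)
  then show ?thesis unfolding durfee_def by (simp add: set_eq_iff)
qed

lemma less_hook_arm_iff:
  assumes rho: "young_diagram n rho"
  shows "q < hook_arm rho i \<longleftrightarrow> (i, i + q) \<in> rho"
proof -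
  obtain m where arm: "{q. (i, i + q) \<in> rho} = {..<m}"
    by (rule young_diagram_monotone_path_initial[OF rho, of "\<lambda>_. i" "\<lambda>q. i + q"])
      (auto simp: mono_def)
  have "{c. i \<le> c \<and> (i, c) \<in> rho} = {i..<i + m}"
  proof (intro set_eqI iffI)
    fix c assume "c \<in> {c. i \<le> c \<and> (i, c) \<in> rho}"
    then have "c - i \<in> {q. (i, i + q) \<in> rho}" "i \<le> c" by auto
    then show "c \<in> {i..<i + m}" unfolding arm by auto
  next
    fix c assume "c \<in> {i..<i + m}"
    then have "c - i \<in> {..<m}" "i \<le> c" by auto
    then show "c \<in> {c. i \<le> c \<and> (i, c) \<in> rho}" unfolding arm[symmetric] by auto
  qed
  then have "hook_arm rho i = m" unfolding hook_arm_def by simp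
  moreover have "(i, i + q) \<in> rho \<longleftrightarrow> q < m" using arm by blast
  ultimately show ?thesis by simp
qed

lemma le_hook_leg_iff:
  assumes rho: "young_diagram n rho" and corner: "(i, i) \<in> rho"
  shows "p \<le> hook_leg rho i \<longleftrightarrow> (i + p, i) \<in> rho"
proof -
  obtain m where leg: "{p. (i + p, i) \<in> rho} = {..<m}"
    by (rule young_diagram_monotone_path_initial[OF rho, of "\<lambda>p. i + p" "\<lambda>_. i"])
      (auto simp: mono_def)
  have "{r. i < r \<and> (r, i) \<in> rho} = {i<..<i + m}"
  proof (intro set_eqI iffI)
    fix r assume "r \<in> {r. i < r \<and> (r, i) \<in> rho}"
    then have "r - i \<in> {p. (i + p, i) \<in> rho}" "i < r" by auto
    then show "r \<in> {i<..<i + m}" unfolding leg by auto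
  next
    fix r assume "r \<in> {i<..<i + m}"
    then have "r - i \<in> {..<m}" "i < r" by auto
    then show "r \<in> {r. i < r \<and> (r, i) \<in> rho}" unfolding leg[symmetric] by auto
  qed
  then have "hook_leg rho i = m - 1" unfolding hook_leg_def by simp
  moreover have mem: "(i + k, i) \<in> rho \<longleftrightarrow> k < m" for k using leg by blast
  moreover have "0 < m" using corner mem[of 0] by simp
  ultimately show ?thesis by (simp add: le_diff_conv2 Suc_le_eq)
qed

lemma inj_on_diag_index_placed_hook: "inj_on diag_index (placed_hook n A B)"
  by (rule inj_onI) (auto simp: placed_hook_def diag_index_def)

lemma corect_label_meets_placed_hook_iff:
  assumes "0 < A" "A \<le> n" "B < n" "a \<le> n" "b \<le> n"
  shows "corect_label n a b \<inter> placed_hook n A B \<noteq> {} \<longleftrightarrow> n - b < A \<or> n - a \<le> B"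
proof
  assume "corect_label n a b \<inter> placed_hook n A B \<noteq> {}"
  then obtain r c where "r < n" "c < n" "r < a \<or> c < b"
     "(r = n - 1 \<and> n - A \<le> c) \<or> (c = n - 1 \<and> n - 1 - B \<le> r)"
    unfolding corect_label_def placed_hook_def square_def by blast
  then show "n - b < A \<or> n - a \<le> B" using assms by linarith
next
  assume "n - b < A \<or> n - a \<le> B"
  then have "(n - 1, n - A) \<in> corect_label n a b \<inter> placed_hook n A B
      \<or> (n - 1 - B, n - 1) \<in> corect_label n a b \<inter> placed_hook n A B"
    using assms unfolding corect_label_def placed_hook_def square_def by auto
  then show "corect_label n a b \<inter> placed_hook n A B \<noteq> {}" by blast
qed

lemma maxdiag_corect_label_diff_hook_diagram:
  assumes rho: "young_diagram n rho" and corner: "(i, i) \<in> rho" and "a \<le> n" "b \<le> n"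
  shows "maxdiag (corect_label n a b - hook_diagram n (hook_arm rho i, hook_leg rho i))
       = (if i \<in> exceeding_hooks rho (n - a) (n - b) then 1 else 0)"
proof -
  let ?A = "hook_arm rho i" and ?B = "hook_leg rho i"
  have "0 < ?A" using less_hook_arm_iff[OF rho, of 0 i] corner by simp
  moreover have "?A \<le> n"
    using less_hook_arm_iff[OF rho, of n i] young_diagram_bounded[OF rho, of i "i + n"] by auto
  moreover have "?B < n"
    using le_hook_leg_iff[OF rho corner, of n] young_diagram_bounded[OF rho, of "i + n" i] by auto
  ultimately have "corect_label n a b \<inter> placed_hook n ?A ?B = {}
      \<longleftrightarrow> i \<notin> exceeding_hooks rho (n - a) (n - b)"
    using corect_label_meets_placed_hook_iff[of ?A n ?B a b] assms(3,4) corner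
      less_hook_arm_iff[OF rho] le_hook_leg_iff[OF rho corner]
    unfolding exceeding_hooks_def by auto
  moreover have "corect_label n a b - hook_diagram n (?A, ?B) = corect_label n a b \<inter> placed_hook n ?A ?B"
    unfolding hook_diagram_def corect_label_def by auto
  moreover have "maxdiag (corect_label n a b \<inter> placed_hook n ?A ?B)
      = (if corect_label n a b \<inter> placed_hook n ?A ?B = {} then 0 else 1)"
  proof (rule maxdiag_inj_on_diag_index)
    show "finite (corect_label n a b \<inter> placed_hook n ?A ?B)"
      by (rule finite_subset[OF _ finite_square[of n]]) (auto simp: corect_label_def)
    show "inj_on diag_index (corect_label n a b \<inter> placed_hook n ?A ?B)"
      by (rule inj_on_subset[OF inj_on_diag_index_placed_hook]) blast
  qed
  ultimately show ?thesis by simp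
qed

theorem mainTheorem12:
  fixes n a b :: nat and lam :: "(nat \<times> nat) set"
  assumes "young_diagram n lam"
    and "card (boxes_below_diag lam) \<le> card (boxes_above_diag lam)"
    and "a \<le> n" and "b \<le> n"
  shows "maxdiag (corect_label n a b - lam)
       = (\<Sum>ab \<leftarrow> hook_decomposition (rotated_complement n lam).
            maxdiag (corect_label n a b - hook_diagram n ab))"
proof -
  define rho where "rho = rotated_complement n lam"
  have rho: "young_diagram n rho"
    unfolding rho_def using assms(1) by (rule young_diagram_rotated_complement)
  let ?H = "exceeding_hooks rho (n - a) (n - b)"
  have "?H \<subseteq> {..<durfee rho}"
    unfolding exceeding_hooks_def by (auto simp: less_durfee_iff[OF rho])
  have "maxdiag (corect_label n a b - lam) = maxdiag (rho - top_left_rectangle (n - a) (n - b))"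
    unfolding corect_label_diff_eq_rot180[OF assms(3,4)] rho_def[symmetric]
    by (rule maxdiag_rot180) (use rho in \<open>auto simp: young_diagram_def\<close>)
  also have "\<dots> = card ?H"
    by (rule maxdiag_diff_rectangle[OF rho])
  also have "\<dots> = (\<Sum>i<durfee rho. if i \<in> ?H then 1 else 0)"
  proof -
    have "{i \<in> {..<durfee rho}. i \<in> ?H} = ?H" using \<open>?H \<subseteq> _\<close> by blast
    then show ?thesis using sum.inter_filter[of "{..<durfee rho}" "\<lambda>_. 1 :: nat" "\<lambda>i. i \<in> ?H"] by simp
  qed
  also have "\<dots> = (\<Sum>i<durfee rho.
      maxdiag (corect_label n a b - hook_diagram n (hook_arm rho i, hook_leg rho i)))"
    by (rule sum.cong) (simp_all add: less_durfee_iff[OF rho]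
        maxdiag_corect_label_diff_hook_diagram[OF rho _ assms(3,4)])
  also have "\<dots> = (\<Sum>ab \<leftarrow> hook_decomposition rho. maxdiag (corect_label n a b - hook_diagram n ab))"
    unfolding hook_decomposition_def
    by (simp add: interv_sum_list_conv_sum_set_nat comp_def atLeast0LessThan)
  finally show ?thesis unfolding rho_def .
qed

end
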